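(* Let $V$ be a finite vector space over a finite field and let $d$ be an integral metric on $V$. Then $d$ is convex if and only if $d$ is both correction-normal and equal-detection-normal.
   Context: An integral metric on $V$ is a metric $d:V\times V\to\mathbb{N}\cup\{\infty\}$ (non-negative, $d(x,y)=0\iff x=y$, symmetric, triangle inequality). For $v\in V$ and $\rho\in\mathbb{N}$ put $B_\rho(v)=\{x: d(v,x)\le\rho\}$, $S_\rho(v)=\{x:d(v,x)=\rho\}$, and $B_{-1}(v)=\emptyset$. The metric $d$ is (integrally) convex if for all $v_1,v_2\in V$ with $d(v_1,v_2)<\infty$ and all $i\in\{0,1,\dots,d(v_1,v_2)\}$ there exists $x\in V$ with $d(v_1,x)=i$ and $d(x,v_2)=d(v_1,v_2)-i$. For distinct $v_1,v_2$, the correction capability $\tau(v_1,v_2)$ is the largest integer $\tau$ with $B_\tau(v_1)\cap B_\tau(v_2)=\emptyset$; $d$ is correction-normal if $\tau(v_1,v_2)=\lfloor (d(v_1,v_2)-1)/2\rfloor$ for all distinct $v_1,v_2$. The equal-detection threshold $\sigma_{\mathrm{eq}}(v_1,v_2)$ is the unique $s\in\mathbb{N}$ (if it exists) with $B_s(v_1)\cap B_{s-1}(v_2)=B_{s-1}(v_1)\cap B_s(v_2)=\emptyset$ and $S_s(v_1)\cap S_s(v_2)\neq\emptyset$, and $\sigma_{\mathrm{eq}}(v_1,v_2)=0$ if no such $s$ exists; $d$ is equal-detection-normal if $d(v_1,v_2)=2\sigma_{\mathrm{eq}}(v_1,v_2)$ for all $v_1,v_2$ with $\sigma_{\mathrm{eq}}(v_1,v_2)\neq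 0$. *)

theory Defs
  imports Main "HOL-Library.Extended_Nat"
begin

definition integral_metric :: "('v \<Rightarrow> 'v \<Rightarrow> enat) \<Rightarrow> bool" where
  "integral_metric d \<longleftrightarrow>
     (\<forall>x y. d x y = 0 \<longleftrightarrow> x = y) \<and>
     (\<forall>x y. d x y = d y x) \<and>
     (\<forall>x y z. d x z \<le> d x y + d y z)"

text \<open>Closed ball of integer radius; radius -1 (any negative radius) gives the empty set.\<close>
definition mball :: "('v \<Rightarrow> 'v \<Rightarrow> enat) \<Rightarrow> int \<Rightarrow> 'v \<Rightarrow> 'v set" where
  "mball d r v = {x. 0 \<le> r \<and> d v x \<le> enat (nat r)}"

definition msphere :: "('v \<Rightarrow> 'v \<Rightarrow> enat) \<Rightarrow> nat \<Rightarrow> 'v \<Rightarrow> 'v set" where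
  "msphere d r v = {x. d v x = enat r}"

definition convex_metric :: "('v \<Rightarrow> 'v \<Rightarrow> enat) \<Rightarrow> bool" where
  "convex_metric d \<longleftrightarrow>
     (\<forall>v1 v2 n. d v1 v2 = enat n \<longrightarrow>
        (\<forall>i\<le>n. \<exists>x. d v1 x = enat i \<and> d x v2 = enat (n - i)))"

definition is_correction_capability :: "('v \<Rightarrow> 'v \<Rightarrow> enat) \<Rightarrow> 'v \<Rightarrow> 'v \<Rightarrow> int \<Rightarrow> bool" where
  "is_correction_capability d v1 v2 t \<longleftrightarrow>
     mball d t v1 \<inter> mball d t v2 = {} \<and>
     (\<forall>t'. mball d t' v1 \<inter> mball d t' v2 = {} \<longrightarrow> t' \<le> t)"

text \<open>For infinite distance both sides are read as infinity: all balls are disjoint.\<close>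
definition correction_normal :: "('v \<Rightarrow> 'v \<Rightarrow> enat) \<Rightarrow> bool" where
  "correction_normal d \<longleftrightarrow>
     (\<forall>v1 v2. v1 \<noteq> v2 \<longrightarrow>
        (case d v1 v2 of
           enat n \<Rightarrow> is_correction_capability d v1 v2 ((int n - 1) div 2)
         | \<infinity> \<Rightarrow> (\<forall>t. mball d t v1 \<inter> mball d t v2 = {})))"

definition eq_detect_cond :: "('v \<Rightarrow> 'v \<Rightarrow> enat) \<Rightarrow> 'v \<Rightarrow> 'v \<Rightarrow> nat \<Rightarrow> bool" where
  "eq_detect_cond d v1 v2 s \<longleftrightarrow>
     mball d (int s) v1 \<inter> mball d (int s - 1) v2 = {} \<and>
     mball d (int s - 1) v1 \<inter> mball d (int s) v2 = {} \<and>
     msphere d s v1 \<inter> msphere d s v2 \<noteq> {}"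

definition sigma_eq :: "('v \<Rightarrow> 'v \<Rightarrow> enat) \<Rightarrow> 'v \<Rightarrow> 'v \<Rightarrow> nat" where
  "sigma_eq d v1 v2 =
     (if \<exists>!s. eq_detect_cond d v1 v2 s then THE s. eq_detect_cond d v1 v2 s else 0)"

definition eq_detection_normal :: "('v \<Rightarrow> 'v \<Rightarrow> enat) \<Rightarrow> bool" where
  "eq_detection_normal d \<longleftrightarrow>
     (\<forall>v1 v2. sigma_eq d v1 v2 \<noteq> 0 \<longrightarrow> d v1 v2 = enat (2 * sigma_eq d v1 v2))"

end

theory Submission
  imports Defs
begin

text \<open>
  For a convex metric, B_p(v1) and B_q(v2) meet exactly when
  p + q \<ge> d(v1, v2); both normality conditions are read off this threshold.
  Conversely, convexity follows by induction on the distance once every pair at distance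
  n \<ge> 2 has a point strictly between them. If a pair has none, a point of
  B_p(v1) \<inter> B_q(v2) with p, q < n forces p + q > n. Correction-normality
  makes the balls of radius r = \<lceil>n/2\<rceil> meet, so n = 2r - 1; but then r is the
  equal-detection threshold of the pair, contradicting equal-detection-normality.
\<close>

lemma mem_mball_iff [simp]: "x \<in> mball d r v \<longleftrightarrow> 0 \<le> r \<and> d v x \<le> enat (nat r)"
  unfolding mball_def by simp

lemma mball_eq_empty_if_neg: "r < 0 \<Longrightarrow> mball d r v = {}"
  by auto

lemma mem_msphere_iff [simp]: "x \<in> msphere d s v \<longleftrightarrow> d v x = enat s"
  unfolding msphere_def by simp

lemma eq_detect_cond_unique:
  assumes "eq_detect_cond d v1 v2 s" and "eq_detect_cond d v1 v2 s'"
  shows "s = s'"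
proof -
  have "\<not> s < s'" if cond: "eq_detect_cond d v1 v2 s" and cond': "eq_detect_cond d v1 v2 s'"
    for s s'
  proof
    assume "s < s'"
    obtain w where "d v1 w = enat s" "d v2 w = enat s"
      using cond unfolding eq_detect_cond_def by auto
    with \<open>s < s'\<close> have "w \<in> mball d (int s') v1 \<inter> mball d (int s' - 1) v2"
      by auto
    moreover from cond' have "mball d (int s') v1 \<inter> mball d (int s' - 1) v2 = {}"
      unfolding eq_detect_cond_def by (rule conjunct1)
    ultimately show False
      by blast
  qed
  from this[OF assms] this[OF assms(2,1)] show ?thesis
    by linarith
qed

lemma sigma_eq_eqI:
  assumes "eq_detect_cond d v1 v2 s"
  shows "sigma_eq d v1 v2 = s"
proof -
  have "\<exists>!s. eq_detect_cond d v1 v2 s"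
    using assms by (rule ex1I) (rule eq_detect_cond_unique[OF _ assms])
  with assms show ?thesis
    unfolding sigma_eq_def by (simp add: the1_equality)
qed

lemma eq_detect_cond_sigma_eq:
  assumes "sigma_eq d v1 v2 \<noteq> 0"
  shows "eq_detect_cond d v1 v2 (sigma_eq d v1 v2)"
proof -
  from assms have "\<exists>!s. eq_detect_cond d v1 v2 s"
    unfolding sigma_eq_def by (rule contrapos_np) simp
  then show ?thesis
    unfolding sigma_eq_def by (simp add: theI')
qed

lemma correction_normal_capability:
  assumes "correction_normal d" and "v1 \<noteq> v2" and "d v1 v2 = enat n"
  shows "is_correction_capability d v1 v2 ((int n - 1) div 2)"
  using assms(1)[unfolded correction_normal_def, rule_format, OF assms(2)] assms(3) by simp

context
  fixes d :: "'v \<Rightarrow> 'v \<Rightarrow> enat"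
  assumes metric: "integral_metric d"
begin

lemma metric_eq_0_iff: "d x y = 0 \<longleftrightarrow> x = y"
  using metric unfolding integral_metric_def by blast

lemma metric_self [simp]: "d x x = 0"
  by (simp add: metric_eq_0_iff)

lemma metric_commute: "d x y = d y x"
  using metric unfolding integral_metric_def by blast

lemma metric_triangle: "d x z \<le> d x y + d y z"
  using metric unfolding integral_metric_def by blast

lemma metric_le_if_mball_inter:
  assumes "x \<in> mball d p v1" and "x \<in> mball d q v2"
  shows "d v1 v2 \<le> enat (nat p + nat q)"
proof -
  have "d v1 v2 \<le> d v1 x + d x v2"
    by (rule metric_triangle)
  also have "\<dots> \<le> enat (nat p) + enat (nat q)"
    using assms metric_commute[of x v2] by (intro add_mono) auto
  finally show ?thesis
    by simp
qed

lemma mball_inter_empty_if_infinite: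
  assumes "d v1 v2 = \<infinity>"
  shows "mball d p v1 \<inter> mball d q v2 = {}"
proof (rule equals0I)
  fix x
  assume "x \<in> mball d p v1 \<inter> mball d q v2"
  then have "d v1 v2 \<le> enat (nat p + nat q)"
    by (blast intro: metric_le_if_mball_inter)
  with assms show False
    by simp
qed

lemma mball_inter_distances:
  assumes "x \<in> mball d p v1" and "x \<in> mball d q v2"
  shows "\<exists>a b. d v1 x = enat a \<and> d x v2 = enat b \<and> a \<le> nat p \<and> b \<le> nat q"
  using assms metric_commute[of v2 x] by (cases "d v1 x"; cases "d x v2") auto

lemma metric_chain_eq:
  assumes uz: "d u z = enat (a + b + c)"
    and ux: "d u x = enat a" and xy: "d x y = enat b" and yz: "d y z = enat c"
  shows "d u y = enat (a + b)" and "d x z = enat (b + c)"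
proof -
  have "d u y \<le> d u x + d x y" "d u z \<le> d u y + d y z"
    by (rule metric_triangle)+
  with ux xy yz uz show "d u y = enat (a + b)"
    by (cases "d u y") auto
  have "d x z \<le> d x y + d y z" "d u z \<le> d u x + d x z"
    by (rule metric_triangle)+
  with ux xy yz uz show "d x z = enat (b + c)"
    by (cases "d x z") auto
qed

lemma convex_mball_inter_empty_iff:
  assumes convex: "convex_metric d" and n: "d v1 v2 = enat n"
    and "0 \<le> p" and "0 \<le> q"
  shows "mball d p v1 \<inter> mball d q v2 = {} \<longleftrightarrow> nat p + nat q < n"
proof
  assume disjoint: "mball d p v1 \<inter> mball d q v2 = {}"
  show "nat p + nat q < n"
  proof (rule ccontr)
    assume "\<not> nat p + nat q < n"
    define i where "i = min (nat p) n"
    have "i \<le> nat p" "n - i \<le> nat q" "i \<le> n"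
      using \<open>\<not> nat p + nat q < n\<close> unfolding i_def by linarith+
    moreover obtain x where "d v1 x = enat i" "d x v2 = enat (n - i)"
      using convex[unfolded convex_metric_def, rule_format, OF n \<open>i \<le> n\<close>] by blast
    ultimately have "x \<in> mball d p v1 \<inter> mball d q v2"
      using assms(3,4) metric_commute[of v2 x] by simp
    with disjoint show False
      by blast
  qed
next
  assume "nat p + nat q < n"
  show "mball d p v1 \<inter> mball d q v2 = {}"
  proof (rule equals0I)
    fix x
    assume "x \<in> mball d p v1 \<inter> mball d q v2"
    then have "d v1 v2 \<le> enat (nat p + nat q)"
      by (blast intro: metric_le_if_mball_inter)
    with n \<open>nat p + nat q < n\<close> show False
      by simp
  qed
qed

lemma convex_imp_correction_normal:
  assumes convex: "convex_metric d"
  shows "correction_normal d"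
  unfolding correction_normal_def
proof (intro allI impI)
  fix v1 v2 :: 'v
  assume "v1 \<noteq> v2"
  show "case d v1 v2 of
          enat n \<Rightarrow> is_correction_capability d v1 v2 ((int n - 1) div 2)
        | \<infinity> \<Rightarrow> (\<forall>t. mball d t v1 \<inter> mball d t v2 = {})"
  proof (cases "d v1 v2")
    case (enat n)
    with \<open>v1 \<noteq> v2\<close> have "n \<noteq> 0"
      using metric_eq_0_iff[of v1 v2] by (auto simp: zero_enat_def)
    have disjoint_iff: "mball d t v1 \<inter> mball d t v2 = {} \<longleftrightarrow> t < 0 \<or> 2 * nat t < n" for t
    proof (cases "t < 0")
      case True
      then show ?thesis
        by (simp add: mball_eq_empty_if_neg)
    next
      case False
      then show ?thesis
        using convex_mball_inter_empty_iff[OF convex enat, of t t] by (simp add: mult_2)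
    qed
    have "t \<le> (int n - 1) div 2" if "mball d t v1 \<inter> mball d t v2 = {}" for t
      using that unfolding disjoint_iff by linarith
    moreover have "mball d ((int n - 1) div 2) v1 \<inter> mball d ((int n - 1) div 2) v2 = {}"
      unfolding disjoint_iff using \<open>n \<noteq> 0\<close> by linarith
    ultimately have "is_correction_capability d v1 v2 ((int n - 1) div 2)"
      unfolding is_correction_capability_def by blast
    with enat show ?thesis
      by simp
  next
    case infinity
    then show ?thesis
      by (simp add: mball_inter_empty_if_infinite)
  qed
qed

lemma convex_imp_eq_detection_normal:
  assumes convex: "convex_metric d"
  shows "eq_detection_normal d"
  unfolding eq_detection_normal_def
proof (intro allI impI)
  fix v1 v2
  assume "sigma_eq d v1 v2 \<noteq> 0"
  define s where "s = sigma_eq d v1 v2"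
  have cond: "eq_detect_cond d v1 v2 s" and "s \<noteq> 0"
    using \<open>sigma_eq d v1 v2 \<noteq> 0\<close> eq_detect_cond_sigma_eq unfolding s_def by auto
  from cond obtain w where "d v1 w = enat s" "d v2 w = enat s"
    unfolding eq_detect_cond_def by auto
  then have "d v1 v2 \<le> enat (s + s)"
    using metric_le_if_mball_inter[of w "int s" v1 "int s" v2] by simp
  then obtain n where n: "d v1 v2 = enat n" "n \<le> s + s"
    by (cases "d v1 v2") auto
  have "s + (s - 1) < n"
    using cond convex_mball_inter_empty_iff[OF convex n(1), of "int s" "int s - 1"] \<open>s \<noteq> 0\<close>
    unfolding eq_detect_cond_def by (simp add: nat_diff_distrib)
  with n show "d v1 v2 = enat (2 * sigma_eq d v1 v2)"
    unfolding s_def[symmetric] by simp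
qed

lemma convex_metricI_intermediate:
  assumes intermediate: "\<And>v1 v2 n. d v1 v2 = enat n \<Longrightarrow> 2 \<le> n \<Longrightarrow>
      \<exists>w k. 0 < k \<and> k < n \<and> d v1 w = enat k \<and> d w v2 = enat (n - k)"
  shows "convex_metric d"
proof -
  have "\<exists>x. d v1 x = enat i \<and> d x v2 = enat (n - i)"
    if "d v1 v2 = enat n" "i \<le> n" for n v1 v2 i
    using that
  proof (induction n arbitrary: v1 v2 i rule: less_induct)
    case (less n)
    show ?case
    proof (cases "2 \<le> n")
      case False
      with less.prems have "i = 0 \<or> i = n"
        by linarith
      then show ?thesis
      proof
        assume "i = 0"
        with less.prems(1) show ?thesis
          by (intro exI[of _ v1]) (simp add: zero_enat_def [symmetric])
      next
        assume "i = n"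
        with less.prems(1) show ?thesis
          by (intro exI[of _ v2]) (simp add: zero_enat_def [symmetric])
      qed
    next
      case True
      then obtain w k where k: "0 < k" "k < n" and w: "d v1 w = enat k" "d w v2 = enat (n - k)"
        using intermediate less.prems(1) by blast
      show ?thesis
      proof (cases "i \<le> k")
        case True
        then obtain x where x: "d v1 x = enat i" "d x w = enat (k - i)"
          using less.IH[OF k(2) w(1)] by blast
        have "d v1 v2 = enat (i + (k - i) + (n - k))"
          using less.prems(1) True k by simp
        from metric_chain_eq(2)[OF this x w(2)] True k have "d x v2 = enat (n - i)"
          by simp
        with x show ?thesis
          by blast
      next
        case False
        with k less.prems(2) have "n - k < n" "i - k \<le> n - k"
          by linarith+
        then obtain y where y: "d w y = enat (i - k)" "d y v2 = enat (n - k - (i - k))"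
          using less.IH[OF _ w(2)] by blast
        have "d v1 v2 = enat (k + (i - k) + (n - i))"
          using less.prems False by simp
        moreover have "d y v2 = enat (n - i)"
          using y(2) False by simp
        ultimately have "d v1 y = enat i"
          using metric_chain_eq(1)[OF _ w(1) y(1)] False by simp
        with \<open>d y v2 = enat (n - i)\<close> show ?thesis
          by blast
      qed
    qed
  qed
  then show ?thesis
    unfolding convex_metric_def by blast
qed

lemma no_intermediate_imp_gap:
  assumes n: "d v1 v2 = enat n"
    and no_intermediate: "\<not> (\<exists>w k. 0 < k \<and> k < n \<and> d v1 w = enat k \<and> d w v2 = enat (n - k))"
    and ab: "d v1 x = enat a" "d x v2 = enat b" and "a < n" "b < n"
  shows "n < a + b"
proof -
  have "d v1 v2 \<le> d v1 x + d x v2"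
    by (rule metric_triangle)
  with n ab have "n \<le> a + b"
    by simp
  moreover have "a + b \<noteq> n"
  proof
    assume "a + b = n"
    with \<open>a < n\<close> \<open>b < n\<close> have "0 < a" "a < n" "b = n - a"
      by linarith+
    with ab have "\<exists>w k. 0 < k \<and> k < n \<and> d v1 w = enat k \<and> d w v2 = enat (n - k)"
      by (intro exI[of _ x] exI[of _ a]) simp
    with no_intermediate show False
      by blast
  qed
  ultimately show ?thesis
    by linarith
qed

lemma no_intermediate_mball_inter_empty:
  assumes n: "d v1 v2 = enat n"
    and no_intermediate: "\<not> (\<exists>w k. 0 < k \<and> k < n \<and> d v1 w = enat k \<and> d w v2 = enat (n - k))"
    and "p + q \<le> n" "p < n" "q < n"
  shows "mball d (int p) v1 \<inter> mball d (int q) v2 = {}"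
proof (rule equals0I)
  fix x
  assume "x \<in> mball d (int p) v1 \<inter> mball d (int q) v2"
  then obtain a b where "d v1 x = enat a" "d x v2 = enat b" "a \<le> p" "b \<le> q"
    using mball_inter_distances[of x "int p" v1 "int q" v2] by auto
  with no_intermediate_imp_gap[OF n no_intermediate] assms(3-5) show False
    by fastforce
qed

lemma no_intermediate_imp_eq_detect_cond:
  assumes CN: "correction_normal d" and n: "d v1 v2 = enat n" and "2 \<le> n"
    and no_intermediate: "\<not> (\<exists>w k. 0 < k \<and> k < n \<and> d v1 w = enat k \<and> d w v2 = enat (n - k))"
  shows "odd n" and "eq_detect_cond d v1 v2 ((n + 1) div 2)"
proof -
  define r where "r = (n + 1) div 2"
  have "0 < r" "r < n" "\<not> int r \<le> (int n - 1) div 2"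
    using \<open>2 \<le> n\<close> unfolding r_def by linarith+
  have "v1 \<noteq> v2"
    using n \<open>2 \<le> n\<close> by (auto simp: zero_enat_def)
  with CN have "is_correction_capability d v1 v2 ((int n - 1) div 2)"
    using n by (rule correction_normal_capability)
  with \<open>\<not> int r \<le> (int n - 1) div 2\<close>
  have "mball d (int r) v1 \<inter> mball d (int r) v2 \<noteq> {}"
    unfolding is_correction_capability_def by blast
  then obtain x where "x \<in> mball d (int r) v1" "x \<in> mball d (int r) v2"
    by blast
  then obtain a b where ab: "d v1 x = enat a" "d x v2 = enat b" "a \<le> r" "b \<le> r"
    using mball_inter_distances[of x "int r" v1 "int r" v2] by auto
  with no_intermediate_imp_gap[OF n no_intermediate] \<open>r < n\<close> have "n < a + b"
    by simp
  with ab have "a = r" "b = r" and n_eq: "n = 2 * r - 1"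
    unfolding r_def by linarith+
  then show "odd n"
    using \<open>0 < r\<close> by simp
  have "int r - 1 = int (r - 1)"
    using \<open>0 < r\<close> by simp
  then have "mball d (int r) v1 \<inter> mball d (int r - 1) v2 = {}"
    and "mball d (int r - 1) v1 \<inter> mball d (int r) v2 = {}"
    using no_intermediate_mball_inter_empty[OF n no_intermediate, of r "r - 1"]
      no_intermediate_mball_inter_empty[OF n no_intermediate, of "r - 1" r] \<open>r < n\<close> n_eq
    by simp_all
  moreover have "x \<in> msphere d r v1 \<inter> msphere d r v2"
    using ab \<open>a = r\<close> \<open>b = r\<close> metric_commute[of v2 x] by simp
  then have "msphere d r v1 \<inter> msphere d r v2 \<noteq> {}"
    by blast
  ultimately show "eq_detect_cond d v1 v2 ((n + 1) div 2)"
    unfolding eq_detect_cond_def r_def[symmetric] by (intro conjI)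
qed

lemma normal_imp_intermediate:
  assumes CN: "correction_normal d" and ED: "eq_detection_normal d"
    and n: "d v1 v2 = enat n" and "2 \<le> n"
  shows "\<exists>w k. 0 < k \<and> k < n \<and> d v1 w = enat k \<and> d w v2 = enat (n - k)"
proof (rule ccontr)
  assume no_intermediate: "\<not> ?thesis"
  note odd = no_intermediate_imp_eq_detect_cond(1)[OF CN n \<open>2 \<le> n\<close> no_intermediate]
  have "sigma_eq d v1 v2 = (n + 1) div 2"
    using no_intermediate_imp_eq_detect_cond(2)[OF CN n \<open>2 \<le> n\<close> no_intermediate]
    by (rule sigma_eq_eqI)
  moreover have "(n + 1) div 2 \<noteq> 0"
    using \<open>2 \<le> n\<close> by simp
  ultimately have "n = 2 * ((n + 1) div 2)"
    using ED n unfolding eq_detection_normal_def by simp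
  with odd show False
    by presburger
qed

lemma normal_imp_convex:
  "correction_normal d \<Longrightarrow> eq_detection_normal d \<Longrightarrow> convex_metric d"
  using convex_metricI_intermediate normal_imp_intermediate by blast

end

theorem proposition3p1:
  fixes scale :: "'f::field \<Rightarrow> 'v::ab_group_add \<Rightarrow> 'v"
    and d :: "'v \<Rightarrow> 'v \<Rightarrow> enat"
  assumes "vector_space scale"
    and "finite (UNIV :: 'f set)"
    and "finite (UNIV :: 'v set)"
    and "integral_metric d"
  shows "convex_metric d \<longleftrightarrow> correction_normal d \<and> eq_detection_normal d"
  using convex_imp_correction_normal[OF assms(4)] convex_imp_eq_detection_normal[OF assms(4)]
    normal_imp_convex[OF assms(4)]
  by blast

end
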